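(* Let $\mathbf{x} \in \Omega$ be fixed, let $S_{\mathbf{x}} \subseteq S$ be the set of values occurring in $\mathbf{x}$, and suppose $G, G' \in \mathcal{F}$ agree both cumulatively and pointwise on $S_{\mathbf{x}}$. Let $\mathbf{Y}$ be a sample of $n$ i.i.d. draws with order statistics $Y_{(1)} \le \dots \le Y_{(n)}$. Then for every $i \in \{1,\dots,n\}$, $$P_G[x_{(i)} = Y_{(i)} \mid Y_{(j)} = x_{(j)}\ \forall j < i] = P_{G'}[x_{(i)} = Y_{(i)} \mid Y_{(j)} = x_{(j)}\ \forall j < i]$$ and $$P_G[x_{(i)} < Y_{(i)} \mid Y_{(j)} = x_{(j)}\ \forall j < i] = P_{G'}[x_{(i)} < Y_{(i)} \mid Y_{(j)} = x_{(j)}\ \forall j < i],$$ where for $i = 1$ the conditioning is vacuous (unconditional probabilities), and for $i \ge 2$ the conditioning event is assumed to have positive probability under $G$ and under $G'$.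
   Context: $S \subset \mathbb{R}$ is a finite set, $\mathcal{F}$ the set of probability distributions on $S$, and $\Omega$ the set of samples of size $n$ with entries in $S$, identified with their sorted versions $x_{(1)} \le \dots \le x_{(n)}$. $P_H$ denotes probability when the entries of $\mathbf{Y}$ are i.i.d. with distribution $H$. For $C \subseteq S$, $G,G'$ agree pointwise on $C$ if $P_G[X = s] = P_{G'}[X = s]$ for all $s \in C$, and cumulatively on $C$ if $P_G[X \le s] = P_{G'}[X \le s]$ for all $s \in C$, where $X$ is a single draw. *)

theory Defs
  imports "HOL-Probability.Probability"
begin

definition ord_stat :: "real list \<Rightarrow> nat \<Rightarrow> real" where
  "ord_stat ys i = sort ys ! (i - 1)"

definition sample_pmf :: "nat \<Rightarrow> real pmf \<Rightarrow> real list pmf" where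
  "sample_pmf n H = replicate_pmf n H"

definition prefix_event :: "real list \<Rightarrow> nat \<Rightarrow> real list set" where
  "prefix_event xs i = {ys. \<forall>j\<in>{1..<i}. ord_stat ys j = ord_stat xs j}"

definition cond_prob :: "'a pmf \<Rightarrow> 'a set \<Rightarrow> 'a set \<Rightarrow> real" where
  "cond_prob p A B = measure_pmf.prob p (A \<inter> B) / measure_pmf.prob p B"

end

theory Submission
  imports Defs
begin

text \<open>
  The points of a finite set \<open>X\<close> of reals and the open gaps between and beyond them partition the
  line into finitely many cells, numbered in increasing order by \<open>cell_index X\<close>. This numbering is
  monotone and injective on \<open>X\<close>, so sorting commutes with it, and whether an order statistic of a
  sample equals or exceeds a given point of \<open>X\<close> can be read off from the cell indices of the sample
  alone. The law of the cell index of a single draw is determined by the point masses and the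
  distribution function at the points of \<open>X\<close>; with \<open>X = set xs\<close> it is therefore the same under
  \<open>G\<close> and \<open>G'\<close>, and so is every probability in the statement. The conditional probabilities are
  quotients of equal numbers.
\<close>

lemma sort_map_mono:
  fixes f :: "'a::linorder \<Rightarrow> 'b::linorder"
  assumes "mono f"
  shows "sort (map f xs) = map f (sort xs)"
proof (rule properties_for_sort)
  show "mset (map f (sort xs)) = mset (map f xs)" by simp
  show "sorted (map f (sort xs))"
    using assms by (simp add: sorted_map sorted_wrt_mono_rel[of _ "(\<le>)"] monoD)
qed

lemma map_pmf_map_replicate_pmf:
  "map_pmf (map f) (replicate_pmf n p) = replicate_pmf n (map_pmf f p)"
proof (induction n)
  case (Suc n)
  show ?case by (simp add: Suc.IH[symmetric] map_bind_pmf bind_map_pmf)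
qed simp

lemma measure_replicate_pmf_eq_if_invariant:
  assumes "map_pmf f p = map_pmf f q"
    and invariant: "\<And>xs ys. length xs = n \<Longrightarrow> map f xs = map f ys \<Longrightarrow>
      xs \<in> A \<Longrightarrow> ys \<in> A"
  shows "measure_pmf.prob (replicate_pmf n p) A = measure_pmf.prob (replicate_pmf n q) A"
proof -
  define A' where "A' = map f ` {xs \<in> A. length xs = n}"
  have determined: "xs \<in> A \<longleftrightarrow> map f xs \<in> A'" if "length xs = n" for xs
  proof
    assume "map f xs \<in> A'"
    then obtain ys where "ys \<in> A" "length ys = n" "map f ys = map f xs" by (auto simp: A'_def)
    then show "xs \<in> A" using invariant that by blast
  qed (use that in \<open>auto simp: A'_def\<close>)
  have "measure_pmf.prob (replicate_pmf n r) A = measure_pmf.prob (replicate_pmf n (map_pmf f r)) A'"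
    for r
  proof -
    have "A \<inter> set_pmf (replicate_pmf n r) = map f -` A' \<inter> set_pmf (replicate_pmf n r)"
      using determined by (auto simp: set_replicate_pmf)
    then have "measure_pmf.prob (replicate_pmf n r) A
        = measure_pmf.prob (replicate_pmf n r) (map f -` A')"
      by (metis measure_Int_set_pmf)
    then show ?thesis by (simp add: map_pmf_map_replicate_pmf[symmetric])
  qed
  then show ?thesis using assms(1) by simp
qed

lemma cond_prob_replicate_pmf_eq_if_invariant:
  assumes "map_pmf f p = map_pmf f q"
    and "\<And>xs ys. length xs = n \<Longrightarrow> map f xs = map f ys \<Longrightarrow>
      xs \<in> A \<Longrightarrow> ys \<in> A"
    and "\<And>xs ys. length xs = n \<Longrightarrow> map f xs = map f ys \<Longrightarrow>
      xs \<in> B \<Longrightarrow> ys \<in> B"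
  shows "cond_prob (replicate_pmf n p) A B = cond_prob (replicate_pmf n q) A B"
proof -
  have "measure_pmf.prob (replicate_pmf n p) (A \<inter> B) = measure_pmf.prob (replicate_pmf n q) (A \<inter> B)"
    by (rule measure_replicate_pmf_eq_if_invariant[OF assms(1)]) (use assms(2,3) in blast)
  moreover have "measure_pmf.prob (replicate_pmf n p) B = measure_pmf.prob (replicate_pmf n q) B"
    by (rule measure_replicate_pmf_eq_if_invariant[OF assms(1) assms(3)])
  ultimately show ?thesis by (simp add: cond_prob_def)
qed

lemma pmf_eq_if_cdf_eq:
  fixes p q :: "nat pmf"
  assumes "\<And>m. measure_pmf.prob p {..m} = measure_pmf.prob q {..m}"
  shows "p = q"
proof (rule pmf_eqI)
  fix m
  have "pmf r m = measure_pmf.prob r {..m} - measure_pmf.prob r {..<m}" for r :: "nat pmf"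
  proof -
    have "{..<m} = {..m} - {m}" by auto
    then show ?thesis by (simp add: measure_pmf.finite_measure_Diff measure_pmf_single)
  qed
  moreover have "measure_pmf.prob r {..<m} = (if m = 0 then 0 else measure_pmf.prob r {..m - 1})"
    for r :: "nat pmf"
    by (cases m) (simp_all add: lessThan_Suc_atMost)
  ultimately show "pmf p m = pmf q m" using assms by simp
qed

definition count_less :: "'a::linorder set \<Rightarrow> 'a \<Rightarrow> nat" where
  "count_less X t = card {s\<in>X. s < t}"

definition count_le :: "'a::linorder set \<Rightarrow> 'a \<Rightarrow> nat" where
  "count_le X t = card {s\<in>X. s \<le> t}"

text \<open>Cells are numbered from 0; the odd-numbered ones are the points of \<open>X\<close>.\<close>
definition cell_index :: "'a::linorder set \<Rightarrow> 'a \<Rightarrow> nat" where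
  "cell_index X t = count_less X t + count_le X t"

context
  fixes X :: "'a::linorder set"
  assumes finite_X: "finite X"
begin

lemma count_less_mono: "t \<le> u \<Longrightarrow> count_less X t \<le> count_less X u"
  unfolding count_less_def using finite_X by (intro card_mono) auto

lemma count_le_mono: "t \<le> u \<Longrightarrow> count_le X t \<le> count_le X u"
  unfolding count_le_def using finite_X by (intro card_mono) auto

lemma count_le_le_count_less: "t < u \<Longrightarrow> count_le X t \<le> count_less X u"
  unfolding count_le_def count_less_def using finite_X by (intro card_mono) auto

lemma count_le_le_card: "count_le X t \<le> card X"
  unfolding count_le_def using finite_X by (intro card_mono) auto

lemma count_le_eq_count_less: "count_le X t = count_less X t + (if t \<in> X then 1 else 0)"
proof -
  have "{s\<in>X. s \<le> t} = (if t \<in> X then insert t {s\<in>X. s < t} else {s\<in>X. s < t})"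
    by (auto simp: order_le_less)
  then show ?thesis using finite_X by (simp add: count_le_def count_less_def)
qed

lemma count_less_le_iff:
  assumes "s \<in> X"
  shows "count_less X t \<le> count_less X s \<longleftrightarrow> t \<le> s"
  using count_less_mono[of t s] count_le_le_count_less[of s t] count_le_eq_count_less[of s] assms
  by force

lemma count_le_le_count_less_iff:
  assumes "s \<in> X"
  shows "count_le X t \<le> count_less X s \<longleftrightarrow> t < s"
  using count_le_le_count_less[of t s] count_le_mono[of s t] count_le_eq_count_less[of s] assms
  by force

lemma count_less_image: "count_less X ` X = {..<card X}"
proof -
  have "inj_on (count_less X) X"
    by (intro inj_onI) (metis count_less_le_iff order.refl order_antisym)
  moreover have "count_less X ` X \<subseteq> {..<card X}"
  proof
    fix k assume "k \<in> count_less X ` X"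
    then obtain s where "s \<in> X" and k: "k = count_less X s" by blast
    then have "{x\<in>X. x < s} \<subset> X" by auto
    then show "k \<in> {..<card X}" using finite_X by (simp add: k count_less_def psubset_card_mono)
  qed
  ultimately show ?thesis by (simp add: card_image card_subset_eq finite_X)
qed

lemma count_less_le_count_le: "count_less X t \<le> count_le X t"
  by (simp add: count_le_eq_count_less)

lemma sublevel_count_less:
  "{t. count_less X t \<le> k} = UNIV \<or> (\<exists>s\<in>X. {t. count_less X t \<le> k} = {t. t \<le> s})"
proof (cases "k < card X")
  case True
  then obtain s where "s \<in> X" "count_less X s = k"
    using count_less_image by (metis imageE lessThan_iff)
  then show ?thesis using count_less_le_iff by blast
next
  case False
  then show ?thesis
    using count_less_le_count_le count_le_le_card by (metis UNIV_eq_I le_trans mem_Collect_eq not_le)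
qed

lemma sublevel_count_le:
  "{t. count_le X t \<le> k} = UNIV \<or> (\<exists>s\<in>X. {t. count_le X t \<le> k} = {t. t < s})"
proof (cases "k < card X")
  case True
  then obtain s where "s \<in> X" "count_less X s = k"
    using count_less_image by (metis imageE lessThan_iff)
  then show ?thesis using count_le_le_count_less_iff by blast
next
  case False
  then show ?thesis
    using count_le_le_card by (metis UNIV_eq_I le_trans mem_Collect_eq not_le)
qed

lemma cell_index_mono: "mono (cell_index X)"
  by (auto intro!: monoI add_mono count_less_mono count_le_mono simp: cell_index_def)

lemma cell_index_less_if_less:
  "a \<in> X \<Longrightarrow> t < a \<Longrightarrow> cell_index X t < cell_index X a"
  using count_le_le_count_less[of t a] count_less_le_count_le[of t] count_le_eq_count_less[of a]
  by (simp add: cell_index_def)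

lemma cell_index_greater_if_greater:
  "a \<in> X \<Longrightarrow> a < t \<Longrightarrow> cell_index X a < cell_index X t"
  using count_le_le_count_less[of a t] count_less_le_count_le[of t] count_le_eq_count_less[of a]
  by (simp add: cell_index_def)

lemma cell_index_eq_iff: "a \<in> X \<Longrightarrow> cell_index X t = cell_index X a \<longleftrightarrow> t = a"
  by (metis cell_index_greater_if_greater cell_index_less_if_less less_irrefl linorder_neq_iff)

lemma cell_index_less_iff: "a \<in> X \<Longrightarrow> cell_index X a < cell_index X t \<longleftrightarrow> a < t"
  by (metis cell_index_eq_iff cell_index_greater_if_greater cell_index_less_if_less
      less_asym linorder_neq_iff)

lemma cell_index_le_even_iff: "cell_index X t \<le> 2 * k \<longleftrightarrow> count_le X t \<le> k"
  unfolding cell_index_def count_le_eq_count_less[of t] by (cases "t \<in> X") (simp_all, presburger+)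

lemma cell_index_le_odd_iff: "cell_index X t \<le> Suc (2 * k) \<longleftrightarrow> count_less X t \<le> k"
  unfolding cell_index_def count_le_eq_count_less[of t] by (cases "t \<in> X") (simp_all, presburger+)

end

lemma map_pmf_cell_index_eq:
  fixes G G' :: "'a::linorder pmf"
  assumes "finite X"
    and pointwise: "\<forall>s\<in>X. pmf G s = pmf G' s"
    and cumulative: "\<forall>s\<in>X. measure_pmf.prob G {t. t \<le> s} = measure_pmf.prob G' {t. t \<le> s}"
  shows "map_pmf (cell_index X) G = map_pmf (cell_index X) G'"
proof (rule pmf_eq_if_cdf_eq)
  have strict: "measure_pmf.prob G {t. t < s} = measure_pmf.prob G' {t. t < s}" if "s \<in> X" for s
  proof -
    have "{t. t < s} = {t. t \<le> s} - {s}" by auto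
    then show ?thesis using that pointwise cumulative
      by (simp add: measure_pmf.finite_measure_Diff measure_pmf_single)
  qed
  fix m
  have "measure_pmf.prob G {t. cell_index X t \<le> m} = measure_pmf.prob G' {t. cell_index X t \<le> m}"
  proof (cases "even m")
    case True
    then obtain k where "m = 2 * k" by blast
    then show ?thesis
      using sublevel_count_le[OF \<open>finite X\<close>, of k] strict
      by (auto simp: cell_index_le_even_iff[OF \<open>finite X\<close>])
  next
    case False
    then obtain k where "m = Suc (2 * k)" by (metis oddE add.commute plus_1_eq_Suc)
    then show ?thesis
      using sublevel_count_less[OF \<open>finite X\<close>, of k] cumulative
      by (auto simp: cell_index_le_odd_iff[OF \<open>finite X\<close>])
  qed
  then show "measure_pmf.prob (map_pmf (cell_index X) G) {..m}
      = measure_pmf.prob (map_pmf (cell_index X) G') {..m}"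
    by (simp add: vimage_def atMost_def)
qed

lemma ord_stat_in_set: "1 \<le> j \<Longrightarrow> j \<le> length xs \<Longrightarrow> ord_stat xs j \<in> set xs"
  using nth_mem[of "j - 1" "sort xs"] by (simp add: ord_stat_def)

lemma cell_index_ord_stat:
  assumes "finite X" and "1 \<le> j" and "j \<le> length ys"
  shows "cell_index X (ord_stat ys j) = sort (map (cell_index X) ys) ! (j - 1)"
  using assms by (simp add: sort_map_mono cell_index_mono ord_stat_def)

lemma cell_index_ord_stat_cong:
  assumes "finite X" and "map (cell_index X) ys = map (cell_index X) zs"
    and "1 \<le> j" and "j \<le> length ys"
  shows "cell_index X (ord_stat ys j) = cell_index X (ord_stat zs j)"
  using assms cell_index_ord_stat[of X j] map_eq_imp_length_eq[OF assms(2)] by simp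

theorem lemma10:
  fixes S :: "real set" and n :: nat and xs :: "real list" and G G' :: "real pmf" and i :: nat
  assumes "finite S"
    and "set_pmf G \<subseteq> S" and "set_pmf G' \<subseteq> S"
    and "length xs = n" and "set xs \<subseteq> S"
    and pointwise: "\<forall>s\<in>set xs. pmf G s = pmf G' s"
    and cumulative: "\<forall>s\<in>set xs. measure_pmf.prob G {t. t \<le> s} = measure_pmf.prob G' {t. t \<le> s}"
    and "1 \<le> i" and "i \<le> n"
    and "i \<ge> 2 \<longrightarrow> measure_pmf.prob (sample_pmf n G) (prefix_event xs i) > 0
                  \<and> measure_pmf.prob (sample_pmf n G') (prefix_event xs i) > 0"
  shows "cond_prob (sample_pmf n G) {ys. ord_stat xs i = ord_stat ys i} (prefix_event xs i)
         = cond_prob (sample_pmf n G') {ys. ord_stat xs i = ord_stat ys i} (prefix_event xs i)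
       \<and> cond_prob (sample_pmf n G) {ys. ord_stat xs i < ord_stat ys i} (prefix_event xs i)
         = cond_prob (sample_pmf n G') {ys. ord_stat xs i < ord_stat ys i} (prefix_event xs i)"
proof -
  let ?X = "set xs" and ?c = "cell_index (set xs)"
  have law: "map_pmf ?c G = map_pmf ?c G'"
    using map_pmf_cell_index_eq[of ?X] pointwise cumulative by simp
  have "ord_stat ys j = ord_stat xs j \<longleftrightarrow> ord_stat zs j = ord_stat xs j"
    and "ord_stat xs j < ord_stat ys j \<longleftrightarrow> ord_stat xs j < ord_stat zs j"
    if "length ys = n" "map ?c ys = map ?c zs" "1 \<le> j" "j \<le> i" for ys zs j
  proof -
    have "ord_stat xs j \<in> ?X"
      using ord_stat_in_set that(3,4) \<open>i \<le> n\<close> \<open>length xs = n\<close> by simp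
    moreover have "?c (ord_stat ys j) = ?c (ord_stat zs j)"
      using cell_index_ord_stat_cong[of ?X ys zs j] that \<open>i \<le> n\<close> by simp
    ultimately show "ord_stat ys j = ord_stat xs j \<longleftrightarrow> ord_stat zs j = ord_stat xs j"
      and "ord_stat xs j < ord_stat ys j \<longleftrightarrow> ord_stat xs j < ord_stat zs j"
      using cell_index_eq_iff[of ?X] cell_index_less_iff[of ?X] by (metis finite_set)+
  qed
  then show ?thesis
    unfolding sample_pmf_def prefix_event_def
    by (intro conjI cond_prob_replicate_pmf_eq_if_invariant[OF law])
      (use \<open>1 \<le> i\<close> in fastforce)+
qed

end
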